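(* Let $P$ be a finite partial IP loop with $3\mid o_3(P)$. Then there exists a finite partial IP loop $Q\ge P$ satisfying all of: $3\mid o_3(Q)$, $\#Q\ge 10$, $\#Q\equiv 4\pmod 6$, and $\Gamma(Q)\subseteq O_2(Q)\times O_2(Q)$.
   Context: A partial IP loop is a set $P$ with a partial binary operation $(x,y)\mapsto xy$ defined on a subset $D(P)\subseteq P\times P$ (the domain) such that: (1) there is $1\in P$ with $(1,x),(x,1)\in D(P)$ and $1x=x1=x$ for all $x\in P$; (2) for each $x\in P$ there is a unique $y\in P$, denoted $x^{-1}$, with $(x,y),(y,x)\in D(P)$ and $xy=yx=1$; (3) whenever $(x,y)\in D(P)$, we have $(x^{-1},xy),(xy,y^{-1})\in D(P)$ and $x^{-1}(xy)=y$, $(xy)y^{-1}=x$. A partial IP loop $(Q,* )$ extends $(P,\cdot)$ (written $P\le Q$) if $P\subseteq Q$, $D(P)\subseteq D(Q)$ and $x\cdot y=x*y$ for all $(x,y)\in D(P)$. The set of gaps is $\Gamma(P)=(P\times P)\setminus D(P)$. $O_2(P)=\{x\in P: (x,x)\in D(P),\ x\ne 1,\ xx=1\}$; $O_3(P)=\{x\in P: (x,x)\in D(P),\ (x,xx)\in D(P),\ x\neq 1,\ x(xx)=1\}$ and $o_3(P)=\#O_3(P)$. *)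

theory Defs
  imports Main
begin

text \<open>A partial binary operation on a carrier P is modelled as mul :: 'a => 'a => 'a option;
  the domain D(P) is the set of pairs in P x P where mul is defined (Some).\<close>

definition pdom :: "'a set \<Rightarrow> ('a \<Rightarrow> 'a \<Rightarrow> 'a option) \<Rightarrow> ('a \<times> 'a) set" where
  "pdom P mul = {(x, y). x \<in> P \<and> y \<in> P \<and> mul x y \<noteq> None}"

definition pinv :: "'a set \<Rightarrow> ('a \<Rightarrow> 'a \<Rightarrow> 'a option) \<Rightarrow> 'a \<Rightarrow> 'a \<Rightarrow> 'a" where
  "pinv P mul e x = (THE y. y \<in> P \<and> mul x y = Some e \<and> mul y x = Some e)"

definition partial_ip_loop :: "'a set \<Rightarrow> ('a \<Rightarrow> 'a \<Rightarrow> 'a option) \<Rightarrow> 'a \<Rightarrow> bool" where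
  "partial_ip_loop P mul e \<longleftrightarrow>
     (\<forall>x\<in>P. \<forall>y\<in>P. \<forall>z. mul x y = Some z \<longrightarrow> z \<in> P) \<and>
     e \<in> P \<and>
     (\<forall>x\<in>P. mul e x = Some x \<and> mul x e = Some x) \<and>
     (\<forall>x\<in>P. \<exists>!y. y \<in> P \<and> mul x y = Some e \<and> mul y x = Some e) \<and>
     (\<forall>x\<in>P. \<forall>y\<in>P. \<forall>z. mul x y = Some z \<longrightarrow>
          mul (pinv P mul e x) z = Some y \<and> mul z (pinv P mul e y) = Some x)"

definition gaps :: "'a set \<Rightarrow> ('a \<Rightarrow> 'a \<Rightarrow> 'a option) \<Rightarrow> ('a \<times> 'a) set" where
  "gaps P mul = (P \<times> P) - pdom P mul"

definition O2 :: "'a set \<Rightarrow> ('a \<Rightarrow> 'a \<Rightarrow> 'a option) \<Rightarrow> 'a \<Rightarrow> 'a set" where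
  "O2 P mul e = {x \<in> P. x \<noteq> e \<and> mul x x = Some e}"

definition O3 :: "'a set \<Rightarrow> ('a \<Rightarrow> 'a \<Rightarrow> 'a option) \<Rightarrow> 'a \<Rightarrow> 'a set" where
  "O3 P mul e = {x \<in> P. x \<noteq> e \<and> (\<exists>z. mul x x = Some z \<and> mul x z = Some e)}"

definition o3 :: "'a set \<Rightarrow> ('a \<Rightarrow> 'a \<Rightarrow> 'a option) \<Rightarrow> 'a \<Rightarrow> nat" where
  "o3 P mul e = card (O3 P mul e)"

text \<open>Extension P <= Q along an injective relabelling f (to allow Q to live in a larger type).\<close>
definition extends_along :: "('a \<Rightarrow> 'b) \<Rightarrow> 'a set \<Rightarrow> ('a \<Rightarrow> 'a \<Rightarrow> 'a option) \<Rightarrow>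
    'b set \<Rightarrow> ('b \<Rightarrow> 'b \<Rightarrow> 'b option) \<Rightarrow> bool" where
  "extends_along f P mul Q mulQ \<longleftrightarrow> inj_on f P \<and> f ` P \<subseteq> Q \<and>
     (\<forall>x\<in>P. \<forall>y\<in>P. \<forall>z. mul x y = Some z \<longrightarrow> mulQ (f x) (f y) = Some (f z))"

end

theory Submission
  imports Defs
begin

text \<open>Only involutions are ever adjoined, and no new product x x equals pinv x, so O3 does
  not change and 3 divides o3 throughout. First each gap (a, b) between two elements of P is closed
  by a fresh involution c with a b = c, together with the products forced by the IP laws; after
  finitely many steps every gap involves an involution. Then n fresh involutions K are adjoined at
  once. For every pair {y, pinv y} of non-involutions, right multiplication by y acts on K as a
  cyclic shift whose length depends on y, with the gaps of y spliced in at reserved slots; distinct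
  shifts keep the products of different y apart, so the IP closure of all these products is
  consistent. Afterwards every gap lies between two involutions, and since n can be any large
  enough number, the order can be taken to be at least 10 and congruent to 4 modulo 6.\<close>

section \<open>Partial IP loops\<close>

lemma partial_ip_loopI:
  assumes unit_mem: "e \<in> Q"
    and inv_mem: "\<And>x. x \<in> Q \<Longrightarrow> \<iota> x \<in> Q"
    and closed: "\<And>x y z. x \<in> Q \<Longrightarrow> y \<in> Q \<Longrightarrow> m x y = Some z \<Longrightarrow> z \<in> Q"
    and unit: "\<And>x. x \<in> Q \<Longrightarrow> m e x = Some x \<and> m x e = Some x"
    and inv: "\<And>x. x \<in> Q \<Longrightarrow> m x (\<iota> x) = Some e \<and> m (\<iota> x) x = Some e"
    and cancel: "\<And>x y z. x \<in> Q \<Longrightarrow> y \<in> Q \<Longrightarrow> m x y = Some z \<Longrightarrow>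
                   m (\<iota> x) z = Some y \<and> m z (\<iota> y) = Some x"
  shows "partial_ip_loop Q m e"
proof -
  have right_inv_unique: "y = \<iota> x" if "x \<in> Q" "y \<in> Q" "m x y = Some e" for x y
  proof -
    have "m (\<iota> x) e = Some y" using cancel[OF that] by blast
    moreover have "m (\<iota> x) e = Some (\<iota> x)" using unit inv_mem that(1) by blast
    ultimately show ?thesis by simp
  qed
  have inv_unique: "\<exists>!y. y \<in> Q \<and> m x y = Some e \<and> m y x = Some e" if "x \<in> Q" for x
    using right_inv_unique[OF that] inv[OF that] inv_mem[OF that] by blast
  have pinv: "pinv Q m e x = \<iota> x" if "x \<in> Q" for x
    unfolding pinv_def using inv[OF that] inv_mem[OF that] right_inv_unique[OF that]
    by (intro the_equality) blast+
  show ?thesis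
    unfolding partial_ip_loop_def
  proof (intro conjI ballI allI impI)
    fix x y z assume "x \<in> Q" "y \<in> Q" "m x y = Some z"
    then show "z \<in> Q" "m (pinv Q m e x) z = Some y" "m z (pinv Q m e y) = Some x"
      using closed[of x y z] cancel[of x y z] pinv[of x] pinv[of y] by simp_all
  next
    fix x assume "x \<in> Q"
    then show "m e x = Some x" "m x e = Some x" "\<exists>!y. y \<in> Q \<and> m x y = Some e \<and> m y x = Some e"
      using unit inv_unique by simp_all
  qed (fact unit_mem)
qed

context
  fixes Q :: "'b set" and m :: "'b \<Rightarrow> 'b \<Rightarrow> 'b option" and e :: 'b
  assumes pil: "partial_ip_loop Q m e"
begin

private lemma pil_unfolded:
  "(\<forall>x\<in>Q. \<forall>y\<in>Q. \<forall>z. m x y = Some z \<longrightarrow> z \<in> Q) \<and> e \<in> Q \<and>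
   (\<forall>x\<in>Q. m e x = Some x \<and> m x e = Some x) \<and>
   (\<forall>x\<in>Q. \<exists>!y. y \<in> Q \<and> m x y = Some e \<and> m y x = Some e) \<and>
   (\<forall>x\<in>Q. \<forall>y\<in>Q. \<forall>z. m x y = Some z \<longrightarrow>
      m (pinv Q m e x) z = Some y \<and> m z (pinv Q m e y) = Some x)"
  using pil unfolding partial_ip_loop_def .

lemma pil_unit_mem: "e \<in> Q"
  using pil_unfolded by (elim conjE)

lemma pil_mul_mem: "x \<in> Q \<Longrightarrow> y \<in> Q \<Longrightarrow> m x y = Some z \<Longrightarrow> z \<in> Q"
  using pil_unfolded[THEN conjunct1] by blast

lemma pil_unit_mul: "x \<in> Q \<Longrightarrow> m e x = Some x"
  and pil_mul_unit: "x \<in> Q \<Longrightarrow> m x e = Some x"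
  using pil_unfolded[THEN conjunct2, THEN conjunct2, THEN conjunct1] by blast+

lemma pil_pinv:
  assumes "x \<in> Q"
  shows "pinv Q m e x \<in> Q \<and> m x (pinv Q m e x) = Some e \<and> m (pinv Q m e x) x = Some e"
proof -
  have "\<exists>!y. y \<in> Q \<and> m x y = Some e \<and> m y x = Some e"
    using pil_unfolded[THEN conjunct2, THEN conjunct2, THEN conjunct2, THEN conjunct1] assms ..
  then show ?thesis unfolding pinv_def by (rule theI')
qed

lemma pil_pinv_mem: "x \<in> Q \<Longrightarrow> pinv Q m e x \<in> Q"
  and pil_mul_pinv: "x \<in> Q \<Longrightarrow> m x (pinv Q m e x) = Some e"
  and pil_pinv_mul: "x \<in> Q \<Longrightarrow> m (pinv Q m e x) x = Some e"
  using pil_pinv by blast+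

lemma pil_cancel_left: "x \<in> Q \<Longrightarrow> y \<in> Q \<Longrightarrow> m x y = Some z \<Longrightarrow> m (pinv Q m e x) z = Some y"
  and pil_cancel_right: "x \<in> Q \<Longrightarrow> y \<in> Q \<Longrightarrow> m x y = Some z \<Longrightarrow> m z (pinv Q m e y) = Some x"
  using pil_unfolded[THEN conjunct2, THEN conjunct2, THEN conjunct2, THEN conjunct2] by blast+

lemma pil_pinv_eqI:
  assumes "x \<in> Q" "y \<in> Q" "m x y = Some e"
  shows "pinv Q m e x = y"
proof -
  have "m (pinv Q m e x) e = Some y" using pil_cancel_left[OF assms] .
  moreover have "m (pinv Q m e x) e = Some (pinv Q m e x)"
    using pil_mul_unit pil_pinv_mem assms(1) by blast
  ultimately show ?thesis by simp
qed

lemma pil_pinv_pinv: "x \<in> Q \<Longrightarrow> pinv Q m e (pinv Q m e x) = x"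
  using pil_pinv_eqI pil_pinv_mem pil_pinv_mul by blast

lemma pil_pinv_unit: "pinv Q m e e = e"
  using pil_pinv_eqI pil_unit_mem pil_unit_mul by blast

lemma pil_defined_pinv_swap:
  assumes "x \<in> Q" "y \<in> Q" "m x y \<noteq> None"
  shows "m (pinv Q m e y) (pinv Q m e x) \<noteq> None"
proof -
  obtain z where z: "m x y = Some z" using assms(3) by blast
  have "m (pinv Q m e x) z = Some y"
    using pil_cancel_left[OF assms(1,2) z] .
  then have "m y (pinv Q m e z) = Some (pinv Q m e x)"
    using pil_cancel_right pil_pinv_mem pil_mul_mem assms z by blast
  then have "m (pinv Q m e y) (pinv Q m e x) = Some (pinv Q m e z)"
    using pil_cancel_left pil_pinv_mem pil_mul_mem assms z by blast
  then show ?thesis by simp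
qed

lemma pil_gap_pinv_swap:
  assumes "x \<in> Q" "y \<in> Q" "m x y = None"
  shows "m (pinv Q m e y) (pinv Q m e x) = None"
  using pil_defined_pinv_swap[OF pil_pinv_mem pil_pinv_mem, OF assms(2,1)] pil_pinv_pinv assms
    by force

end


lemma card_left_gaps_eq:
  assumes pil: "partial_ip_loop S m e" and fin: "finite S" and y: "y \<in> S"
  shows "card {x \<in> S. m x y = None} = card {z \<in> S. m z (pinv S m e y) = None}"
proof -
  let ?y' = "pinv S m e y"
  have y': "?y' \<in> S" "pinv S m e ?y' = y"
    using pil_pinv_mem[OF pil y] pil_pinv_pinv[OF pil y] by simp_all
  let ?D = "{x \<in> S. m x y \<noteq> None}" and ?R = "{z \<in> S. m z ?y' \<noteq> None}"
  have undo_y: "m (the (m x y)) ?y' = Some x" "the (m x y) \<in> S" if "x \<in> ?D" for x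
    using that pil_cancel_right[OF pil _ y] pil_mul_mem[OF pil _ y] by auto
  have undo_y': "m (the (m z ?y')) y = Some z" "the (m z ?y') \<in> S" if "z \<in> ?R" for z
    using that pil_cancel_right[OF pil _ y'(1)] pil_mul_mem[OF pil _ y'(1)] y'(2) by auto
  have "bij_betw (\<lambda>x. the (m x y)) ?D ?R"
  proof (rule bij_betw_byWitness[where f' = "\<lambda>z. the (m z ?y')"])
    show "\<forall>x\<in>?D. the (m (the (m x y)) ?y') = x" "\<forall>z\<in>?R. the (m (the (m z ?y')) y) = z"
      using undo_y(1) undo_y'(1) by simp_all
    show "(\<lambda>x. the (m x y)) ` ?D \<subseteq> ?R" "(\<lambda>z. the (m z ?y')) ` ?R \<subseteq> ?D"
      using undo_y undo_y' by fastforce+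
  qed
  then have "card ?D = card ?R" by (rule bij_betw_same_card)
  moreover have "{x \<in> S. m x y = None} = S - ?D" "{z \<in> S. m z ?y' = None} = S - ?R" by auto
  ultimately show ?thesis using fin by (simp add: card_Diff_subset)
qed

section \<open>Adjoining new products\<close>

lemma extends_along_trans:
  assumes "extends_along f P m Q mQ" "extends_along g Q mQ R mR"
  shows "extends_along (g \<circ> f) P m R mR"
proof -
  have f: "inj_on f P" "f ` P \<subseteq> Q"
      "\<And>x y z. x \<in> P \<Longrightarrow> y \<in> P \<Longrightarrow> m x y = Some z \<Longrightarrow> mQ (f x) (f y) = Some (f z)"
    and g: "inj_on g Q" "g ` Q \<subseteq> R"
      "\<And>x y z. x \<in> Q \<Longrightarrow> y \<in> Q \<Longrightarrow> mQ x y = Some z \<Longrightarrow> mR (g x) (g y) = Some (g z)"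
    using assms unfolding extends_along_def by simp_all
  have "inj_on (g \<circ> f) P" using comp_inj_on[OF f(1) inj_on_subset[OF g(1) f(2)]] .
  moreover have "(g \<circ> f) ` P \<subseteq> R" using f(2) g(2) by auto
  moreover have "mR ((g \<circ> f) x) ((g \<circ> f) y) = Some ((g \<circ> f) z)"
    if "x \<in> P" "y \<in> P" "m x y = Some z" for x y z
    using g(3)[OF _ _ f(3)[OF that]] f(2) that by auto
  ultimately show ?thesis unfolding extends_along_def by blast
qed

lemma extends_along_id_refl: "extends_along id S m S m"
  unfolding extends_along_def by simp

text \<open>The orbit of a product x y = z under the moves (x, y, z) \<mapsto> (\<iota> x, z, y) and
  (x, y, z) \<mapsto> (z, \<iota> y, x) of axiom (3), where \<iota> is the inversion.\<close>

definition ip_orbit :: "('b \<Rightarrow> 'b) \<Rightarrow> 'b \<Rightarrow> 'b \<Rightarrow> 'b \<Rightarrow> ('b \<times> 'b \<times> 'b) set" where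
  "ip_orbit \<iota> x y z =
     {(x, y, z), (\<iota> x, z, y), (z, \<iota> y, x), (\<iota> z, x, \<iota> y), (y, \<iota> z, \<iota> x), (\<iota> y, \<iota> x, \<iota> z)}"

lemma ip_orbit_closed:
  assumes "\<iota> (\<iota> x) = x" "\<iota> (\<iota> y) = y" "\<iota> (\<iota> z) = z" "(p, q, r) \<in> ip_orbit \<iota> x y z"
  shows "(\<iota> p, r, q) \<in> ip_orbit \<iota> x y z \<and> (r, \<iota> q, p) \<in> ip_orbit \<iota> x y z"
  using assms unfolding ip_orbit_def by auto

lemma ip_orbit_fixed_ends:
  assumes "\<iota> a = a" "\<iota> c = c"
  shows "ip_orbit \<iota> a b c = {(a, b, c), (a, c, b), (c, \<iota> b, a), (c, a, \<iota> b), (b, c, a), (\<iota> b, a,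
    c)}"
  using assms unfolding ip_orbit_def by auto

lemma ip_orbit_unit:
  assumes "\<iota> e = e" "\<iota> u = u"
  shows "ip_orbit \<iota> e u u = {(e, u, u), (u, u, e), (u, e, u)}"
  using assms unfolding ip_orbit_def by auto

definition extend_mul ::
    "'b set \<Rightarrow> ('b \<Rightarrow> 'b \<Rightarrow> 'b option) \<Rightarrow> ('b \<times> 'b \<times> 'b) set \<Rightarrow> 'b \<Rightarrow> 'b \<Rightarrow> 'b option" where
  "extend_mul S m T x y =
     (if \<exists>z. (x, y, z) \<in> T then Some (THE z. (x, y, z) \<in> T)
      else if x \<in> S \<and> y \<in> S then m x y else None)"

lemma extend_mul_triple:
  assumes "\<And>z'. (x, y, z') \<in> T \<Longrightarrow> z' = z" "(x, y, z) \<in> T"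
  shows "extend_mul S m T x y = Some z"
proof -
  have "(THE z. (x, y, z) \<in> T) = z" by (rule the_equality) (use assms in blast)+
  then show ?thesis using assms(2) unfolding extend_mul_def by auto
qed

lemma extend_mul_old:
  assumes "\<nexists>z. (x, y, z) \<in> T" "x \<in> S" "y \<in> S"
  shows "extend_mul S m T x y = m x y"
  using assms unfolding extend_mul_def by auto

lemma extend_mul_old_Some:
  assumes "\<And>x y z. (x, y, z) \<in> T \<Longrightarrow> x \<in> S \<Longrightarrow> y \<in> S \<Longrightarrow> m x y = None"
    and "x \<in> S" "y \<in> S" "m x y = Some z"
  shows "extend_mul S m T x y = Some z"
proof -
  have "\<nexists>z'. (x, y, z') \<in> T" using assms by fastforce
  then show ?thesis using extend_mul_old[of x y T S m] assms(2-4) by simp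
qed

lemma extend_mul_SomeE:
  assumes "extend_mul S m T x y = Some z"
  obtains z' where "(x, y, z') \<in> T"
    | "x \<in> S" "y \<in> S" "m x y = Some z" "\<nexists>z'. (x, y, z') \<in> T"
  using assms unfolding extend_mul_def by (auto split: if_splits)

text \<open>New products are given as triples (x, y, x y). Closure under the two moves of axiom (3)
  lets the unit and inverse laws for a new element u follow from the single triple (e, u, u).\<close>

locale ip_extension =
  fixes S S' :: "'b set" and m :: "'b \<Rightarrow> 'b \<Rightarrow> 'b option" and e :: 'b
    and \<iota> :: "'b \<Rightarrow> 'b" and T :: "('b \<times> 'b \<times> 'b) set"
  assumes pil: "partial_ip_loop S m e" and subset: "S \<subseteq> S'"
    and inv_old: "\<And>x. x \<in> S \<Longrightarrow> \<iota> x = pinv S m e x"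
    and inv_mem: "\<And>x. x \<in> S' \<Longrightarrow> \<iota> x \<in> S'"
    and inv_inv: "\<And>x. x \<in> S' \<Longrightarrow> \<iota> (\<iota> x) = x"
    and T_mem: "\<And>x y z. (x, y, z) \<in> T \<Longrightarrow> x \<in> S' \<and> y \<in> S' \<and> z \<in> S'"
    and T_closed: "\<And>x y z. (x, y, z) \<in> T \<Longrightarrow> (\<iota> x, z, y) \<in> T \<and> (z, \<iota> y, x) \<in> T"
    and T_fun: "\<And>x y z z'. (x, y, z) \<in> T \<Longrightarrow> (x, y, z') \<in> T \<Longrightarrow> z' = z"
    and T_gap: "\<And>x y z. (x, y, z) \<in> T \<Longrightarrow> x \<in> S \<Longrightarrow> y \<in> S \<Longrightarrow> m x y = None"
    and T_unit: "\<And>u. u \<in> S' - S \<Longrightarrow> (e, u, u) \<in> T"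
begin

lemma mul_triple: "(x, y, z) \<in> T \<Longrightarrow> extend_mul S m T x y = Some z"
  by (rule extend_mul_triple[OF T_fun])

lemma mul_old: "x \<in> S \<Longrightarrow> y \<in> S \<Longrightarrow> m x y = Some z \<Longrightarrow> extend_mul S m T x y = Some z"
  by (intro extend_mul_old_Some) (use T_gap in blast)+

lemma extends: "extends_along id S m S' (extend_mul S m T)"
  unfolding extends_along_def using subset mul_old by simp

lemma unit_inv_new:
  assumes u: "u \<in> S' - S"
  shows "extend_mul S m T e u = Some u \<and> extend_mul S m T u e = Some u \<and>
    extend_mul S m T u (\<iota> u) = Some e \<and> extend_mul S m T (\<iota> u) u = Some e"
proof -
  have iu: "\<iota> u \<in> S' - S" using u inv_mem inv_inv inv_old pil_pinv_mem[OF pil] by (metis Diff_iff)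
  have "(e, u, u) \<in> T" "(e, \<iota> u, \<iota> u) \<in> T" using T_unit u iu by blast+
  then have "(u, \<iota> u, e) \<in> T" "(\<iota> u, u, e) \<in> T" "(u, e, u) \<in> T"
    using T_closed inv_inv u by (metis DiffD1)+
  then show ?thesis using mul_triple \<open>(e, u, u) \<in> T\<close> by blast
qed

lemma unit_inv_old:
  assumes x: "x \<in> S"
  shows "extend_mul S m T e x = Some x \<and> extend_mul S m T x e = Some x \<and>
    extend_mul S m T x (\<iota> x) = Some e \<and> extend_mul S m T (\<iota> x) x = Some e"
  using mul_old[OF pil_unit_mem[OF pil] x] mul_old[OF x pil_unit_mem[OF pil]]
    mul_old[OF x pil_pinv_mem[OF pil x]] mul_old[OF pil_pinv_mem[OF pil x] x]
    pil_unit_mul[OF pil x] pil_mul_unit[OF pil x] pil_mul_pinv[OF pil x] pil_pinv_mul[OF pil x]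
    inv_old[OF x] by simp

theorem extended_pil: "partial_ip_loop S' (extend_mul S m T) e"
proof (rule partial_ip_loopI[where \<iota> = \<iota>])
  show "e \<in> S'" using pil_unit_mem[OF pil] subset by blast
next
  fix x y z assume xyz: "extend_mul S m T x y = Some z"
  then show "z \<in> S'"
  proof (cases rule: extend_mul_SomeE)
    case (1 z')
    then show ?thesis using mul_triple xyz T_mem by (metis option.inject)
  next
    case 2
    then show ?thesis using pil_mul_mem[OF pil] subset by blast
  qed
  from xyz show "extend_mul S m T (\<iota> x) z = Some y \<and> extend_mul S m T z (\<iota> y) = Some x"
  proof (cases rule: extend_mul_SomeE)
    case (1 z')
    then have "(x, y, z) \<in> T" using mul_triple xyz by simp
    then show ?thesis using T_closed mul_triple by blast
  next
    case 2
    have "z \<in> S" using pil_mul_mem[OF pil] 2 by blast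
    then show ?thesis
      using mul_old[OF pil_pinv_mem[OF pil] \<open>z \<in> S\<close> pil_cancel_left[OF pil]]
        mul_old[OF \<open>z \<in> S\<close> pil_pinv_mem[OF pil] pil_cancel_right[OF pil]] inv_old 2 by simp
  qed
next
  fix x assume "x \<in> S'"
  then show "extend_mul S m T e x = Some x \<and> extend_mul S m T x e = Some x"
    "extend_mul S m T x (\<iota> x) = Some e \<and> extend_mul S m T (\<iota> x) x = Some e"
    using unit_inv_new[of x] unit_inv_old[of x] by (cases "x \<in> S"; blast)+
qed (use inv_mem in blast)

end

lemma O3_extension_eq:
  assumes pil: "partial_ip_loop S m e" and pil': "partial_ip_loop S' m' e"
    and ext: "extends_along id S m S' m'"
    and new: "S' - S \<subseteq> O2 S' m' e"
    and sq: "\<And>x. x \<in> S \<Longrightarrow> m x x = None \<Longrightarrow> m' x x \<noteq> Some (pinv S m e x)"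
  shows "O3 S' m' e = O3 S m e"
proof -
  have SS': "S \<subseteq> S'" and agree: "\<And>x y z. x \<in> S \<Longrightarrow> y \<in> S \<Longrightarrow> m x y = Some z \<Longrightarrow> m' x y = Some z"
    using ext unfolding extends_along_def by auto
  have O3_iff: "x \<in> O3 Q mQ e \<longleftrightarrow> x \<in> Q \<and> x \<noteq> e \<and> mQ x x = Some (pinv Q mQ e x)"
    if pilQ: "partial_ip_loop Q mQ e" for Q mQ x
  proof
    assume "x \<in> O3 Q mQ e"
    then obtain z where z: "x \<in> Q" "x \<noteq> e" "mQ x x = Some z" "mQ x z = Some e"
      unfolding O3_def by blast
    then have "pinv Q mQ e x = z" using pil_pinv_eqI[OF pilQ] pil_mul_mem[OF pilQ] by blast
    then show "x \<in> Q \<and> x \<noteq> e \<and> mQ x x = Some (pinv Q mQ e x)" using z by simp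
  next
    assume "x \<in> Q \<and> x \<noteq> e \<and> mQ x x = Some (pinv Q mQ e x)"
    then show "x \<in> O3 Q mQ e" unfolding O3_def using pil_mul_pinv[OF pilQ] by blast
  qed
  have pinv_old: "pinv S' m' e x = pinv S m e x" if "x \<in> S" for x
    using pil_pinv_eqI[OF pil'] agree pil_mul_pinv[OF pil] pil_pinv_mem[OF pil] that SS' by blast
  show ?thesis
  proof (intro set_eqI iffI)
    fix x assume x: "x \<in> O3 S' m' e"
    show "x \<in> O3 S m e"
    proof (cases "x \<in> S")
      case True
      obtain w where "m x x = Some w"
        using sq[OF True] x pinv_old[OF True] unfolding O3_iff[OF pil'] by auto
      then have "m x x = Some (pinv S m e x)"
        using agree[OF True True] x pinv_old[OF True] unfolding O3_iff[OF pil'] by simp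
      then show ?thesis using x True unfolding O3_iff[OF pil] O3_iff[OF pil'] by simp
    next
      case False
      then have "m' x x = Some e" "x \<noteq> e" using new x unfolding O2_def O3_def by auto
      moreover have "x \<in> S'" using x unfolding O3_def by simp
      ultimately have "pinv S' m' e x = x" using pil_pinv_eqI[OF pil'] by blast
      then show ?thesis using x \<open>m' x x = Some e\<close> \<open>x \<noteq> e\<close> unfolding O3_iff[OF pil'] by simp
    qed
  next
    fix x assume "x \<in> O3 S m e"
    then have "x \<in> S" "x \<noteq> e" "m x x = Some (pinv S m e x)" unfolding O3_iff[OF pil] by simp_all
    then show "x \<in> O3 S' m' e" using agree SS' pinv_old unfolding O3_iff[OF pil'] by auto
  qed
qed

section \<open>Closing gaps one at a time\<close>

lemma extend_fill_gap:
  assumes pil: "partial_ip_loop S m e" and ab: "a \<in> S" "b \<in> S" "m a b = None" and c: "c \<notin> S"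
  obtains m' where "partial_ip_loop (insert c S) m' e" "extends_along id S m (insert c S) m'"
    "m' a b = Some c" "m' c c = Some e"
    "\<And>x y. x \<in> S \<Longrightarrow> y \<in> S \<Longrightarrow> m x y = None \<Longrightarrow> m' x y = None \<or> m' x y = Some c"
proof -
  define \<iota> where "\<iota> x = (if x = c then c else pinv S m e x)" for x
  define T where "T = ip_orbit \<iota> a b c \<union> ip_orbit \<iota> e c c"
  have eS: "e \<in> S" using pil_unit_mem[OF pil] .
  have inv_old: "\<iota> x = pinv S m e x" if "x \<in> S" for x
    using that c by (auto simp: \<iota>_def)
  have inv_mem: "\<iota> x \<in> insert c S" if "x \<in> insert c S" for x
    using that pil_pinv_mem[OF pil] by (auto simp: \<iota>_def)
  have inv_inv: "\<iota> (\<iota> x) = x" if "x \<in> insert c S" for x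
    using that c pil_pinv_mem[OF pil] pil_pinv_pinv[OF pil] by (auto simp: \<iota>_def)
  have \<iota>: "\<iota> a = pinv S m e a" "\<iota> b = pinv S m e b" "\<iota> c = c" "\<iota> e = e"
    using inv_old ab eS pil_pinv_unit[OF pil] by (auto simp: \<iota>_def)
  have ab_inv: "pinv S m e a \<in> S" "pinv S m e b \<in> S"
    using pil_pinv_mem[OF pil] ab by blast+
  have ne: "a \<noteq> e" "b \<noteq> e" "b \<noteq> pinv S m e a" "a \<noteq> pinv S m e b"
    "pinv S m e a \<noteq> e" "pinv S m e b \<noteq> e"
    using ab pil_unit_mul[OF pil] pil_mul_unit[OF pil] pil_mul_pinv[OF pil]
      pil_pinv_pinv[OF pil] pil_pinv_unit[OF pil] by (metis option.distinct(1))+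
  have gap_inv: "m (pinv S m e b) (pinv S m e a) = None"
    using pil_gap_pinv_swap[OF pil ab] .
  have T_fun: "z' = z" if "(x, y, z) \<in> T" "(x, y, z') \<in> T" for x y z z'
    using that c eS ab ab_inv ne unfolding T_def ip_orbit_def \<iota> by auto
  have T_mul: "extend_mul S m T x y = Some z" if "(x, y, z) \<in> T" for x y z
    by (rule extend_mul_triple[OF T_fun[OF that] that])
  have T_gap: "m x y = None \<and> z = c" if "(x, y, z) \<in> T" "x \<in> S" "y \<in> S" for x y z
    using that ab gap_inv c unfolding T_def ip_orbit_def \<iota> by auto
  have T_mem: "x \<in> insert c S \<and> y \<in> insert c S \<and> z \<in> insert c S" if "(x, y, z) \<in> T" for x y z
    using that ab ab_inv eS unfolding T_def ip_orbit_def \<iota> by auto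
  have T_closed: "(\<iota> x, z, y) \<in> T \<and> (z, \<iota> y, x) \<in> T" if "(x, y, z) \<in> T" for x y z
  proof -
    have "\<iota> (\<iota> u) = u" if "u \<in> {a, b, c, e}" for u
      using that inv_inv ab eS by blast
    then show ?thesis
      using that ip_orbit_closed[of \<iota> a b c x y z] ip_orbit_closed[of \<iota> e c c x y z]
      unfolding T_def by blast
  qed
  have T_unit: "(e, u, u) \<in> T" if "u \<in> insert c S - S" for u
    using that unfolding T_def ip_orbit_def by auto
  interpret ext: ip_extension S "insert c S" m e \<iota> T
    by unfold_locales (fact | blast dest: T_gap)+
  show ?thesis
  proof
    show "partial_ip_loop (insert c S) (extend_mul S m T) e" by (rule ext.extended_pil)
    show "extends_along id S m (insert c S) (extend_mul S m T)" by (rule ext.extends)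
    show "extend_mul S m T a b = Some c" "extend_mul S m T c c = Some e"
      using T_mul \<iota> unfolding T_def ip_orbit_def by auto
  next
    fix x y assume xy: "x \<in> S" "y \<in> S" "m x y = None"
    show "extend_mul S m T x y = None \<or> extend_mul S m T x y = Some c"
    proof (cases "\<exists>z. (x, y, z) \<in> T")
      case True
      then show ?thesis using T_gap xy T_mul by blast
    next
      case False
      then show ?thesis using extend_mul_old xy by metis
    qed
  qed
qed

lemma fill_gap_within_step:
  assumes inf: "infinite (UNIV :: 'b set)" and pil: "partial_ip_loop (S :: 'b set) m e"
    and fin: "finite S" and AS: "A \<subseteq> S" and inv: "S - A \<subseteq> O2 S m e"
    and gap: "gaps S m \<inter> A \<times> A \<noteq> {}"
  obtains S1 m1 where "partial_ip_loop S1 m1 e" "finite S1" "extends_along id S m S1 m1"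
    "S1 - A \<subseteq> O2 S1 m1 e" "gaps S1 m1 \<inter> A \<times> A \<subset> gaps S m \<inter> A \<times> A" "O3 S1 m1 e = O3 S m e"
proof -
  obtain a b where ab: "a \<in> A" "b \<in> A" "m a b = None"
    using gap unfolding gaps_def pdom_def by auto
  obtain c where c: "c \<notin> S" using ex_new_if_finite[OF inf fin] by blast
  obtain m1 where pil1: "partial_ip_loop (insert c S) m1 e"
    and ext1: "extends_along id S m (insert c S) m1"
    and m1: "m1 a b = Some c" "m1 c c = Some e"
    and gap1: "\<And>x y. x \<in> S \<Longrightarrow> y \<in> S \<Longrightarrow> m x y = None \<Longrightarrow> m1 x y = None \<or> m1 x y = Some c"
    using extend_fill_gap[OF pil _ _ ab(3) c] ab AS by blast
  have agree1: "m1 x y = m x y" if "x \<in> S" "y \<in> S" "m x y \<noteq> None" for x y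
    using ext1 that unfolding extends_along_def by auto
  have "gaps (insert c S) m1 \<inter> A \<times> A \<subset> gaps S m \<inter> A \<times> A"
  proof
    show "gaps (insert c S) m1 \<inter> A \<times> A \<subseteq> gaps S m \<inter> A \<times> A"
      using AS agree1 unfolding gaps_def pdom_def by auto
    have "(a, b) \<in> gaps S m \<inter> A \<times> A" "(a, b) \<notin> gaps (insert c S) m1"
      using ab AS m1(1) unfolding gaps_def pdom_def by auto
    then show "gaps (insert c S) m1 \<inter> A \<times> A \<noteq> gaps S m \<inter> A \<times> A" by blast
  qed
  moreover have "insert c S - A \<subseteq> O2 (insert c S) m1 e"
    using inv agree1 m1(2) c pil_unit_mem[OF pil] AS unfolding O2_def by auto
  moreover have "O3 (insert c S) m1 e = O3 S m e"
  proof (rule O3_extension_eq[OF pil pil1 ext1])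
    show "insert c S - S \<subseteq> O2 (insert c S) m1 e"
      using m1(2) c pil_unit_mem[OF pil] unfolding O2_def by auto
    fix x assume "x \<in> S" "m x x = None"
    then show "m1 x x \<noteq> Some (pinv S m e x)"
      using gap1 c pil_pinv_mem[OF pil] by fastforce
  qed
  ultimately show ?thesis using that pil1 ext1 fin by blast
qed

lemma fill_gaps_within:
  assumes inf: "infinite (UNIV :: 'b set)"
  shows "partial_ip_loop (S :: 'b set) m e \<Longrightarrow> finite S \<Longrightarrow> A \<subseteq> S \<Longrightarrow> S - A \<subseteq> O2 S m e \<Longrightarrow>
    \<exists>S' m'. partial_ip_loop S' m' e \<and> finite S' \<and> extends_along id S m S' m' \<and>
      S' - A \<subseteq> O2 S' m' e \<and> gaps S' m' \<inter> A \<times> A = {} \<and> O3 S' m' e = O3 S m e"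
proof (induction "card (gaps S m \<inter> A \<times> A)" arbitrary: S m rule: less_induct)
  case less
  show ?case
  proof (cases "gaps S m \<inter> A \<times> A = {}")
    case True
    then show ?thesis using less.prems extends_along_id_refl by blast
  next
    case False
    then obtain S1 m1 where S1: "partial_ip_loop S1 m1 e" "finite S1" "extends_along id S m S1 m1"
      "S1 - A \<subseteq> O2 S1 m1 e" "gaps S1 m1 \<inter> A \<times> A \<subset> gaps S m \<inter> A \<times> A" "O3 S1 m1 e = O3 S m e"
      using fill_gap_within_step[OF inf less.prems] by blast
    have "finite (gaps S m \<inter> A \<times> A)" using less.prems(2) unfolding gaps_def by auto
    then have "card (gaps S1 m1 \<inter> A \<times> A) < card (gaps S m \<inter> A \<times> A)"
      using S1(5) by (simp add: psubset_card_mono)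
    moreover have "A \<subseteq> S1" using less.prems(3) S1(3) unfolding extends_along_def by auto
    ultimately obtain S' m' where S': "partial_ip_loop S' m' e" "finite S'"
      "extends_along id S1 m1 S' m'"
      "S' - A \<subseteq> O2 S' m' e" "gaps S' m' \<inter> A \<times> A = {}" "O3 S' m' e = O3 S1 m1 e"
      using less.hyps S1(1,2,4) by blast
    then show ?thesis using S1(6) extends_along_trans[OF S1(3) S'(3)] by auto
  qed
qed

lemma fill_gaps_off_involutions:
  assumes "infinite (UNIV :: 'b set)" "partial_ip_loop (S :: 'b set) m e" "finite S"
  obtains S' m' where "partial_ip_loop S' m' e" "finite S'" "extends_along id S m S' m'"
    "gaps S' m' \<subseteq> O2 S' m' e \<times> S' \<union> S' \<times> O2 S' m' e" "O3 S' m' e = O3 S m e"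
proof -
  obtain S' m' where "partial_ip_loop S' m' e" "finite S'" "extends_along id S m S' m'"
    "S' - S \<subseteq> O2 S' m' e" "gaps S' m' \<inter> S \<times> S = {}" "O3 S' m' e = O3 S m e"
    using fill_gaps_within[OF assms(1,2,3) order_refl] by auto
  moreover have "gaps S' m' \<subseteq> O2 S' m' e \<times> S' \<union> S' \<times> O2 S' m' e"
    using calculation(4,5) unfolding gaps_def by blast
  ultimately show ?thesis using that by blast
qed


section \<open>Orbit designs\<close>

text \<open>In a product of the closure of G, the positions of elements of I, of N and of pinv ` N
  identify the generating triple of G; the assumptions on G then make the closure single valued.\<close>

locale orbit_design =
  fixes G :: "('b \<times> 'b \<times> 'b) set" and I N U :: "'b set" and \<iota> :: "'b \<Rightarrow> 'b" and e :: 'b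
  assumes ends: "\<And>a b c. (a, b, c) \<in> G \<Longrightarrow> a \<in> I \<and> c \<in> I \<and> b \<in> N \<and> a \<noteq> c"
    and inv_inv: "\<And>x. \<iota> (\<iota> x) = x" and inv_unit: "\<iota> e = e"
    and inv_I: "\<And>x. x \<in> I \<Longrightarrow> \<iota> x = x" and inv_N: "\<And>y. y \<in> N \<Longrightarrow> \<iota> y \<notin> N"
    and I_N: "\<And>x. x \<in> I \<Longrightarrow> x \<notin> N" and e_I: "e \<notin> I" and e_N: "e \<notin> N"
    and U_I: "U \<subseteq> I"
    and G_fun: "\<And>a b c c'. (a, b, c) \<in> G \<Longrightarrow> (a, b, c') \<in> G \<Longrightarrow> c = c'"
    and G_inj: "\<And>a a' b c. (a, b, c) \<in> G \<Longrightarrow> (a', b, c) \<in> G \<Longrightarrow> a = a'"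
    and G_edge: "\<And>a b b' c. (a, b, c) \<in> G \<Longrightarrow> (a, b', c) \<in> G \<Longrightarrow> b = b'"
    and G_no_reverse: "\<And>a b b' c. (a, b, c) \<in> G \<Longrightarrow> (c, b', a) \<notin> G"
begin

definition orbits :: "('b \<times> 'b \<times> 'b) set" where
  "orbits = (\<Union>(a, b, c)\<in>G. ip_orbit \<iota> a b c) \<union> (\<Union>u\<in>U. ip_orbit \<iota> e u u)"

lemma orbits_generator:
  assumes "(p, q, r) \<in> orbits"
  shows "(p, q, r) \<in> G \<or> (p, r, q) \<in> G \<or> (r, \<iota> q, p) \<in> G \<or> (q, \<iota> r, p) \<in> G \<or>
    (r, p, q) \<in> G \<or> (q, \<iota> p, r) \<in> G \<or>
    (p = e \<and> q = r \<and> q \<in> U) \<or> (p = q \<and> r = e \<and> p \<in> U) \<or> (q = e \<and> p = r \<and> p \<in> U)"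
proof -
  from assms consider (G) a b c where "(a, b, c) \<in> G" "(p, q, r) \<in> ip_orbit \<iota> a b c"
    | (U) u where "u \<in> U" "(p, q, r) \<in> ip_orbit \<iota> e u u"
    unfolding orbits_def by blast
  then show ?thesis
  proof cases
    case G
    have "\<iota> a = a" "\<iota> c = c" using ends[OF G(1)] inv_I by simp_all
    then have "(p, q, r) \<in> {(a, b, c), (a, c, b), (c, \<iota> b, a), (c, a, \<iota> b), (b, c, a), (\<iota> b, a, c)}"
      using G(2) ip_orbit_fixed_ends by metis
    then show ?thesis using G(1) inv_inv by (elim insertE emptyE) simp_all
  next
    case U
    then show ?thesis using ip_orbit_unit[of \<iota> e u] inv_unit inv_I U_I by auto
  qed
qed

lemmas generator_simps = inv_I inv_N inv_unit I_N e_I e_N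

lemma orbits_N_left: "(p, q, r) \<in> orbits \<Longrightarrow> p \<in> N \<Longrightarrow> (r, p, q) \<in> G"
  and orbits_inv_N_left: "(p, q, r) \<in> orbits \<Longrightarrow> \<iota> p \<in> N \<Longrightarrow> (q, \<iota> p, r) \<in> G"
  and orbits_unit_left: "(e, q, r) \<in> orbits \<Longrightarrow> r = q"
  and orbits_unit_right: "(p, e, r) \<in> orbits \<Longrightarrow> p \<in> I \<Longrightarrow> r = p"
  and orbits_I_N: "(p, q, r) \<in> orbits \<Longrightarrow> p \<in> I \<Longrightarrow> q \<in> N \<Longrightarrow> (p, q, r) \<in> G"
  and orbits_I_inv_N: "(p, q, r) \<in> orbits \<Longrightarrow> p \<in> I \<Longrightarrow> \<iota> q \<in> N \<Longrightarrow> (r, \<iota> q, p) \<in> G"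
  and orbits_I_I: "(p, q, r) \<in> orbits \<Longrightarrow> p \<in> I \<Longrightarrow> q \<in> I \<Longrightarrow>
      (p, r, q) \<in> G \<or> (q, \<iota> r, p) \<in> G \<or> (p = q \<and> r = e)"
  by (drule orbits_generator; auto dest: ends subsetD[OF U_I] simp: generator_simps)+

lemma orbits_left_kinds: "(p, q, r) \<in> orbits \<Longrightarrow> p \<in> I \<or> p \<in> N \<or> \<iota> p \<in> N \<or> p = e"
  and orbits_middle_kinds: "(p, q, r) \<in> orbits \<Longrightarrow> q \<in> I \<or> q \<in> N \<or> \<iota> q \<in> N \<or> q = e"
  by (drule orbits_generator; auto dest: ends subsetD[OF U_I] simp: generator_simps)+

lemma orbits_single_valued:
  assumes xyz: "(x, y, z) \<in> orbits" and xyz': "(x, y, z') \<in> orbits"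
  shows "z' = z"
proof -
  consider "x = e" | "x \<in> N" | "\<iota> x \<in> N" | "x \<in> I" using orbits_left_kinds[OF xyz] by blast
  then show ?thesis
  proof cases
    case 1
    then show ?thesis using orbits_unit_left xyz xyz' by metis
  next
    case 2
    then show ?thesis using orbits_N_left[OF xyz] orbits_N_left[OF xyz'] G_inj by blast
  next
    case 3
    then show ?thesis using orbits_inv_N_left[OF xyz] orbits_inv_N_left[OF xyz'] G_fun by blast
  next
    case x: 4
    consider "y = e" | "y \<in> N" | "\<iota> y \<in> N" | "y \<in> I" using orbits_middle_kinds[OF xyz] by blast
    then show ?thesis
    proof cases
      case 1
      then show ?thesis using orbits_unit_right x xyz xyz' by metis
    next
      case 2
      then show ?thesis using orbits_I_N[OF xyz x] orbits_I_N[OF xyz' x] G_fun by blast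
    next
      case 3
      then show ?thesis using orbits_I_inv_N[OF xyz x] orbits_I_inv_N[OF xyz' x] G_inj by blast
    next
      case y: 4
      have no_loop: "(x, w, x) \<notin> G" for w using ends by blast
      from orbits_I_I[OF xyz x y] orbits_I_I[OF xyz' x y] show ?thesis
        using G_edge G_no_reverse no_loop inv_inv by metis
    qed
  qed
qed

end

section \<open>Closing all gaps at non-involutions\<close>

lemma add_mod_eq_if:
  fixes k s n :: nat
  assumes "k < n" "s \<le> n"
  shows "(k + s) mod n = (if k + s < n then k + s else k + s - n)"
  using assms by (simp add: mod_if)

lemma add_mod_right_cancel:
  fixes k k' s n :: nat
  assumes "k < n" "k' < n" "s \<le> n"
  shows "(k + s) mod n = (k' + s) mod n \<longleftrightarrow> k = k'"
  using assms add_mod_eq_if[of k n s] add_mod_eq_if[of k' n s] by auto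

lemma add_mod_left_cancel:
  fixes k s s' n :: nat
  assumes "k < n" "s < n" "s' < n"
  shows "(k + s) mod n = (k + s') mod n \<longleftrightarrow> s = s'"
  using assms add_mod_eq_if[of k n s] add_mod_eq_if[of k n s'] by auto

lemma add_mod_neq_self:
  fixes k s n :: nat
  assumes "k < n" "0 < s" "s < n"
  shows "(k + s) mod n \<noteq> k"
  using assms add_mod_eq_if[of k n s] by auto

lemma add_mod_eq_add_iff:
  fixes k p s n :: nat
  assumes "k < n" "p + s < n"
  shows "(k + s) mod n = p + s \<longleftrightarrow> k = p"
  using assms add_mod_eq_if[of k n s] by auto

lemma add_mod_no_round_trip:
  fixes k k' s s' n :: nat
  assumes "k < n" "k' < n" "0 < s" "0 < s'" "s + s' < n" "k' = (k + s) mod n"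
  shows "(k' + s') mod n \<noteq> k"
proof
  assume round_trip: "(k' + s') mod n = k"
  have "k + s < n \<and> k' = k + s \<or> \<not> k + s < n \<and> k' = k + s - n"
    using assms(1,5,6) add_mod_eq_if[of k n s] by (simp split: if_split_asm)
  moreover have "k' + s' < n \<and> k = k' + s' \<or> \<not> k' + s' < n \<and> k = k' + s' - n"
    using assms(2,5) round_trip add_mod_eq_if[of k' n s'] by (simp split: if_split_asm)
  ultimately show False using assms by linarith
qed

lemma add_mod_surj:
  fixes k s n :: nat
  assumes "k < n" "s \<le> n"
  obtains k0 where "k0 < n" "(k0 + s) mod n = k"
proof
  show "(k + n - s) mod n < n" using assms by simp
  have "((k + n - s) mod n + s) mod n = (k + n - s + s) mod n" by (simp add: mod_add_left_eq)
  then show "((k + n - s) mod n + s) mod n = k" using assms by simp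
qed

lemma mult_add_eq_mult_add_iff:
  fixes b q q' s s' :: nat
  assumes "s < b" "s' < b"
  shows "b * q + s = b * q' + s' \<longleftrightarrow> q = q' \<and> s = s'"
proof
  assume eq: "b * q + s = b * q' + s'"
  have "(b * q + s) div b = q" "(b * q' + s') div b = q'" using assms by simp_all
  moreover have "(b * q + s) mod b = s" "(b * q' + s') mod b = s'" using assms by simp_all
  ultimately show "q = q' \<and> s = s'" using eq by metis
qed simp

text \<open>The fresh elements \<nu> k, k < n, are adjoined as new involutions. The numbering \<phi> of S
  fixes the shift by which each y acts on them and the slots reserved for the gaps of y.\<close>

locale involution_gap_filling =
  fixes S :: "'b set" and m :: "'b \<Rightarrow> 'b \<Rightarrow> 'b option" and e :: 'b
    and \<phi> :: "'b \<Rightarrow> nat" and \<nu> :: "nat \<Rightarrow> 'b" and n :: nat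
  assumes pil: "partial_ip_loop S m e" and fin: "finite S"
    and gaps_touch_O2: "gaps S m \<subseteq> O2 S m e \<times> S \<union> S \<times> O2 S m e"
    and \<phi>_inj: "inj_on \<phi> S" and \<phi>_less: "\<And>x. x \<in> S \<Longrightarrow> \<phi> x < card S"
    and \<nu>_inj: "inj \<nu>" and \<nu>_new: "\<And>k. \<nu> k \<notin> S"
    and n_large: "(card S + 1) * card S * card S < n"
begin

abbreviation \<iota> :: "'b \<Rightarrow> 'b" where "\<iota> \<equiv> pinv S m e"

definition shift :: "'b \<Rightarrow> nat" where
  "shift y = \<phi> y + 1"

text \<open>Slots are spaced card S + 1 apart, more than any shift, so a slot never equals another
  slot plus a shift.\<close>

definition slot :: "'b \<Rightarrow> 'b \<Rightarrow> nat" where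
  "slot y d = (card S + 1) * (\<phi> y * card S + \<phi> d)"

lemma shift_bounds: "y \<in> S \<Longrightarrow> 0 < shift y \<and> shift y \<le> card S"
  using \<phi>_less by (simp add: shift_def Suc_le_eq)

lemma shift_eq_iff: "y \<in> S \<Longrightarrow> y' \<in> S \<Longrightarrow> shift y = shift y' \<longleftrightarrow> y = y'"
  using \<phi>_inj by (auto simp: shift_def inj_on_eq_iff)

lemma shift_add_shift_less: "y \<in> S \<Longrightarrow> y' \<in> S \<Longrightarrow> shift y + shift y' < n"
proof -
  assume "y \<in> S" "y' \<in> S"
  then have "0 < card S" "shift y + shift y' \<le> 2 * card S"
    using shift_bounds[of y] shift_bounds[of y'] by auto
  moreover have "2 * card S \<le> (card S + 1) * card S * card S"
    using \<open>0 < card S\<close> by (cases "card S") (auto simp: algebra_simps)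
  ultimately show ?thesis using n_large by linarith
qed

lemma shift_less: "y \<in> S \<Longrightarrow> shift y < n"
  using shift_add_shift_less[of y y] by simp

lemma slot_shift_less: "y \<in> S \<Longrightarrow> d \<in> S \<Longrightarrow> slot y d + shift y < n"
proof -
  assume yd: "y \<in> S" "d \<in> S"
  have "\<phi> y * card S + \<phi> d + 1 \<le> card S * card S"
  proof -
    have "(\<phi> y + 1) * card S \<le> card S * card S" using \<phi>_less[OF yd(1)] by (intro mult_le_mono1) simp
    then show ?thesis using \<phi>_less[OF yd(2)] by (simp add: algebra_simps)
  qed
  then have "(card S + 1) * (\<phi> y * card S + \<phi> d + 1) \<le> (card S + 1) * card S * card S"
    unfolding mult.assoc by (rule mult_le_mono2)
  moreover have "shift y < card S + 1" using shift_bounds[OF yd(1)] by simp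
  ultimately show ?thesis using n_large unfolding slot_def by (simp add: algebra_simps)
qed

lemma slot_eq_iff:
  assumes "y \<in> S" "d \<in> S" "y' \<in> S" "d' \<in> S"
  shows "slot y d = slot y' d' \<longleftrightarrow> y = y' \<and> d = d'"
proof -
  have "slot y d = slot y' d' \<longleftrightarrow> card S * \<phi> y + \<phi> d = card S * \<phi> y' + \<phi> d'"
    unfolding slot_def by (simp only: mult_cancel1 add_is_0 one_neq_zero mult.commute simp_thms)
  also have "\<dots> \<longleftrightarrow> \<phi> y = \<phi> y' \<and> \<phi> d = \<phi> d'"
    using mult_add_eq_mult_add_iff \<phi>_less assms by simp
  also have "\<dots> \<longleftrightarrow> y = y' \<and> d = d'"
    using \<phi>_inj assms by (auto simp: inj_on_eq_iff)
  finally show ?thesis .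
qed

lemma slot_shift_eq_iff:
  assumes "y \<in> S" "d \<in> S" "y' \<in> S" "d' \<in> S"
  shows "slot y d + shift y = slot y' d' + shift y' \<longleftrightarrow> y = y' \<and> d = d'"
proof -
  have "shift y < card S + 1" "shift y' < card S + 1" using shift_bounds assms by fastforce+
  then show ?thesis
    using assms mult_add_eq_mult_add_iff[of "shift y" "card S + 1" "shift y'"] slot_eq_iff
    unfolding slot_def by (metis slot_def)
qed

lemma slot_neq_slot_shift:
  assumes "y' \<in> S"
  shows "slot y d \<noteq> slot y' d' + shift y'"
proof -
  have "(card S + 1) * q + 0 \<noteq> (card S + 1) * q' + shift y'" for q q'
    using mult_add_eq_mult_add_iff[of 0 "card S + 1" "shift y'" q q'] shift_bounds[OF assms] by simp
  from this[of "\<phi> y * card S + \<phi> d" "\<phi> y' * card S + \<phi> d'"] show ?thesis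
    unfolding slot_def by simp
qed


lemma unit_mem: "e \<in> S"
  using pil_unit_mem[OF pil] .

lemma inv_mem: "x \<in> S \<Longrightarrow> \<iota> x \<in> S"
  and inv_inv: "x \<in> S \<Longrightarrow> \<iota> (\<iota> x) = x"
  using pil_pinv_mem[OF pil] pil_pinv_pinv[OF pil] by blast+

lemma gap_with_non_involution:
  assumes "x \<in> S" "y \<in> S" "m x y = None" "\<iota> y \<noteq> y"
  shows "x \<noteq> e \<and> \<iota> x = x"
proof -
  have "(x, y) \<in> gaps S m" using assms(1-3) unfolding gaps_def pdom_def by simp
  moreover have "y \<notin> O2 S m e"
    using assms(2,4) pil_pinv_eqI[OF pil] unfolding O2_def by blast
  ultimately have "x \<in> O2 S m e" using gaps_touch_O2 by blast
  then show ?thesis using pil_pinv_eqI[OF pil] unfolding O2_def by blast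
qed

definition Npos :: "'b set" where
  "Npos = {y \<in> S. \<iota> y \<noteq> y \<and> \<phi> y < \<phi> (\<iota> y)}"

lemma Npos_mem: "y \<in> Npos \<Longrightarrow> y \<in> S \<and> \<iota> y \<in> S \<and> \<iota> y \<noteq> y"
  unfolding Npos_def using inv_mem by blast

lemma inv_Npos_notin: "y \<in> Npos \<Longrightarrow> \<iota> y \<notin> Npos"
  unfolding Npos_def using inv_mem inv_inv by fastforce

lemma Npos_neq_unit: "y \<in> Npos \<Longrightarrow> y \<noteq> e \<and> \<iota> y \<noteq> e"
  using Npos_mem inv_inv pil_pinv_unit[OF pil] by metis

lemma Npos_or_inv_Npos:
  assumes "x \<in> S" "\<iota> x \<noteq> x"
  shows "x \<in> Npos \<or> \<iota> x \<in> Npos"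
proof -
  have "\<phi> x \<noteq> \<phi> (\<iota> x)" using assms \<phi>_inj inv_mem by (metis inj_on_eq_iff)
  then show ?thesis using assms inv_mem inv_inv unfolding Npos_def by (cases "\<phi> x < \<phi> (\<iota> x)") auto
qed

definition lgaps :: "'b \<Rightarrow> 'b set" where
  "lgaps y = {x \<in> S. m x y = None}"

definition rgaps :: "'b \<Rightarrow> 'b set" where
  "rgaps y = {z \<in> S. m z (\<iota> y) = None}"

lemma lgaps_involution:
  assumes "y \<in> Npos" "d \<in> lgaps y"
  shows "d \<in> S \<and> m d y = None \<and> d \<noteq> e \<and> \<iota> d = d"
  using assms gap_with_non_involution Npos_mem unfolding lgaps_def by blast

lemma rgaps_involution:
  assumes "y \<in> Npos" "r \<in> rgaps y"
  shows "r \<in> S \<and> m r (\<iota> y) = None \<and> r \<noteq> e \<and> \<iota> r = r"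
proof -
  have "\<iota> (\<iota> y) \<noteq> \<iota> y" using Npos_mem[OF assms(1)] inv_inv by metis
  then show ?thesis
    using assms gap_with_non_involution[of r "\<iota> y"] Npos_mem unfolding rgaps_def by blast
qed

definition match :: "'b \<Rightarrow> 'b \<Rightarrow> 'b" where
  "match y = (SOME f. bij_betw f (lgaps y) (rgaps y))"

lemma match_bij: "y \<in> Npos \<Longrightarrow> bij_betw (match y) (lgaps y) (rgaps y)"
proof -
  assume y: "y \<in> Npos"
  have "card (lgaps y) = card (rgaps y)"
    unfolding lgaps_def rgaps_def using card_left_gaps_eq[OF pil fin] Npos_mem[OF y] by blast
  moreover have "finite (lgaps y)" "finite (rgaps y)"
    using fin unfolding lgaps_def rgaps_def by auto
  ultimately have "\<exists>f. bij_betw f (lgaps y) (rgaps y)" using finite_same_card_bij by blast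
  then show ?thesis unfolding match_def by (rule someI_ex)
qed

definition K :: "'b set" where
  "K = \<nu> ` {..<n}"

lemma \<nu>_eq_iff [simp]: "\<nu> k = \<nu> k' \<longleftrightarrow> k = k'"
  using \<nu>_inj by (simp add: inj_eq)

lemma \<nu>_notin [simp]: "\<nu> k \<notin> S"
  using \<nu>_new .

lemma K_disjoint: "x \<in> K \<Longrightarrow> x \<notin> S"
  unfolding K_def by auto

definition inv_ext :: "'b \<Rightarrow> 'b" where
  "inv_ext x = (if x \<in> S then \<iota> x else x)"

definition I :: "'b set" where
  "I = {x \<in> S. x \<noteq> e \<and> \<iota> x = x} \<union> K"

text \<open>The new products a y = c, all with y in Npos and a, c involutions. On the new elements
  right multiplication by y is the cyclic shift by shift y; each left gap d of y is routed through
  a slot of its own, d y = \<nu> (slot y d + shift y) and \<nu> (slot y d) y = match y d. Distinct shifts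
  keep the pairs {a, c} used by different y apart.\<close>

definition G :: "('b \<times> 'b \<times> 'b) set" where
  "G = {(\<nu> k, y, \<nu> ((k + shift y) mod n)) | k y. y \<in> Npos \<and> k < n \<and> k \<notin> slot y ` lgaps y}
     \<union> {(\<nu> (slot y d), y, match y d) | y d. y \<in> Npos \<and> d \<in> lgaps y}
     \<union> {(d, y, \<nu> (slot y d + shift y)) | y d. y \<in> Npos \<and> d \<in> lgaps y}"

lemma G_cases [consumes 1, case_names shift slot_in slot_out]:
  assumes "(a, b, c) \<in> G"
  obtains (shift) k where "b \<in> Npos" "k < n" "k \<notin> slot b ` lgaps b"
      "a = \<nu> k" "c = \<nu> ((k + shift b) mod n)"
    | (slot_in) d where "b \<in> Npos" "d \<in> lgaps b" "a = \<nu> (slot b d)" "c = match b d"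
    | (slot_out) d where "b \<in> Npos" "d \<in> lgaps b" "a = d" "c = \<nu> (slot b d + shift b)"
  using assms unfolding G_def by blast


lemma Npos_S: "y \<in> Npos \<Longrightarrow> y \<in> S"
  using Npos_mem by blast

lemma match_rgaps: "y \<in> Npos \<Longrightarrow> d \<in> lgaps y \<Longrightarrow> match y d \<in> rgaps y"
  by (rule bij_betw_apply[OF match_bij])

lemma match_S: "y \<in> Npos \<Longrightarrow> d \<in> lgaps y \<Longrightarrow> match y d \<in> S"
  using match_rgaps unfolding rgaps_def by blast

lemma match_eq_iff:
  "y \<in> Npos \<Longrightarrow> d \<in> lgaps y \<Longrightarrow> d' \<in> lgaps y \<Longrightarrow> match y d = match y d' \<longleftrightarrow> d = d'"
  by (rule inj_on_eq_iff[OF bij_betw_imp_inj_on[OF match_bij]])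

lemma slot_less: "y \<in> S \<Longrightarrow> d \<in> S \<Longrightarrow> slot y d < n"
  using slot_shift_less[of y d] by simp

lemma \<nu>_K: "k < n \<Longrightarrow> \<nu> k \<in> K"
  unfolding K_def by simp

lemma K_I: "x \<in> K \<Longrightarrow> x \<in> I"
  and involution_I: "x \<in> S \<Longrightarrow> x \<noteq> e \<Longrightarrow> \<iota> x = x \<Longrightarrow> x \<in> I"
  unfolding I_def by simp_all

lemma G_ends:
  assumes "(a, b, c) \<in> G"
  shows "a \<in> I \<and> c \<in> I \<and> b \<in> Npos \<and> a \<noteq> c"
  using assms
proof (cases rule: G_cases)
  case (shift k)
  have "b \<in> S" using shift(1) Npos_S by blast
  then have "(k + shift b) mod n \<noteq> k"
    using add_mod_neq_self[OF shift(2) _ shift_less] shift_bounds by blast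
  moreover have "(k + shift b) mod n < n" using shift by simp
  ultimately show ?thesis using shift \<nu>_K K_I by simp
next
  case (slot_in d)
  have "d \<in> S" using lgaps_involution[OF slot_in(1,2)] by blast
  have "c \<in> S" "c \<noteq> e" "\<iota> c = c"
    unfolding slot_in(4)
      using rgaps_involution[OF slot_in(1) match_rgaps[OF slot_in(1,2)]] by simp_all
  moreover have "a \<in> K" "a \<notin> S"
    using slot_in(3) slot_less[OF Npos_S[OF slot_in(1)] \<open>d \<in> S\<close>] \<nu>_K by simp_all
  ultimately show ?thesis using slot_in(1) K_I involution_I by blast
next
  case (slot_out d)
  have "d \<in> S" "d \<noteq> e" "\<iota> d = d" using lgaps_involution[OF slot_out(1,2)] by blast+
  moreover have "c \<in> K" "c \<notin> S"
    using slot_out(4) slot_shift_less[OF Npos_S[OF slot_out(1)] \<open>d \<in> S\<close>] \<nu>_K by simp_all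
  ultimately show ?thesis using slot_out(1,3) K_I involution_I by blast
qed

lemma shift_le: "y \<in> S \<Longrightarrow> shift y \<le> n"
  using shift_less[of y] by simp

lemma shift_round_trip:
  assumes "k < n" "y \<in> S" "y' \<in> S"
  shows "((k + shift y) mod n + shift y') mod n \<noteq> k"
  using add_mod_no_round_trip[OF assms(1) _ _ _ shift_add_shift_less[OF assms(2,3)]] assms
    shift_bounds by simp

lemma match_neq_\<nu>: "y \<in> Npos \<Longrightarrow> d \<in> lgaps y \<Longrightarrow> match y d \<noteq> \<nu> k"
  using match_S by fastforce

lemma shift_mod_eq_slot_shift_iff:
  assumes "k < n" "y \<in> S" "d \<in> S"
  shows "(k + shift y) mod n = slot y d + shift y \<longleftrightarrow> k = slot y d"
    and "slot y d + shift y = (k + shift y) mod n \<longleftrightarrow> k = slot y d"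
  using add_mod_eq_add_iff[OF assms(1) slot_shift_less[OF assms(2,3)]] by auto

lemmas G_simps = slot_eq_iff slot_shift_eq_iff match_eq_iff match_S Npos_S lgaps_def
  shift_le shift_less shift_eq_iff add_mod_right_cancel add_mod_left_cancel
    shift_mod_eq_slot_shift_iff
  match_neq_\<nu> match_neq_\<nu>[symmetric] shift_round_trip shift_round_trip[symmetric]
    slot_neq_slot_shift slot_neq_slot_shift[symmetric]

lemma G_fun: "(a, b, c) \<in> G \<Longrightarrow> (a, b, c') \<in> G \<Longrightarrow> c = c'"
  by (elim G_cases) (auto simp: G_simps)

lemma G_inj: "(a, b, c) \<in> G \<Longrightarrow> (a', b, c) \<in> G \<Longrightarrow> a = a'"
  by (elim G_cases) (auto simp: G_simps)

lemma G_edge: "(a, b, c) \<in> G \<Longrightarrow> (a, b', c) \<in> G \<Longrightarrow> b = b'"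
  by (elim G_cases) (auto simp: G_simps)

lemma G_no_reverse: "(a, b, c) \<in> G \<Longrightarrow> (c, b', a) \<notin> G"
  by (auto simp: G_simps elim!: G_cases)


lemma inv_ext_inv_ext: "inv_ext (inv_ext x) = x"
  unfolding inv_ext_def using inv_mem inv_inv by simp

lemma inv_ext_I: "x \<in> I \<Longrightarrow> inv_ext x = x"
  unfolding inv_ext_def I_def using K_disjoint by auto

lemma inv_ext_unit: "inv_ext e = e"
  unfolding inv_ext_def using unit_mem pil_pinv_unit[OF pil] by simp

lemma inv_ext_S: "x \<in> S \<Longrightarrow> inv_ext x = \<iota> x"
  unfolding inv_ext_def by simp

lemma I_Npos_disjoint: "x \<in> I \<Longrightarrow> x \<notin> Npos"
  unfolding I_def using Npos_mem K_disjoint by blast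

lemma unit_notin_I: "e \<notin> I"
  unfolding I_def using K_disjoint unit_mem by blast

lemma K_subset_I: "K \<subseteq> I"
  using K_I by blast

lemma inv_ext_Npos_notin: "y \<in> Npos \<Longrightarrow> inv_ext y \<notin> Npos"
  using inv_Npos_notin Npos_S inv_ext_S by simp

lemma unit_notin_Npos: "e \<notin> Npos"
  using Npos_neq_unit by blast

end

sublocale involution_gap_filling \<subseteq> design: orbit_design G I Npos K inv_ext e
  using G_ends inv_ext_inv_ext inv_ext_unit inv_ext_I inv_ext_Npos_notin I_Npos_disjoint
    unit_notin_I unit_notin_Npos K_subset_I G_fun G_inj G_edge G_no_reverse
  by unfold_locales

context involution_gap_filling
begin

definition filled_mul :: "'b \<Rightarrow> 'b \<Rightarrow> 'b option" where
  "filled_mul = extend_mul S m design.orbits"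

lemma orbitsE [consumes 1, case_names G unit]:
  assumes "(x, y, z) \<in> design.orbits"
  obtains (G) a b c where "(a, b, c) \<in> G" "(x, y, z) \<in> ip_orbit inv_ext a b c"
    | (unit) u where "u \<in> K" "(x, y, z) \<in> ip_orbit inv_ext e u u"
  using assms unfolding design.orbits_def by blast

lemma ip_orbit_subset_orbits:
  "(a, b, c) \<in> G \<Longrightarrow> ip_orbit inv_ext a b c \<subseteq> design.orbits"
  "u \<in> K \<Longrightarrow> ip_orbit inv_ext e u u \<subseteq> design.orbits"
  unfolding design.orbits_def by blast+

lemma orbits_cases [consumes 1, case_names G unit]:
  assumes "(x, y, z) \<in> design.orbits"
  obtains (G) a b c where "(a, b, c) \<in> G"
      "(x, y, z) \<in> {(a, b, c), (a, c, b), (c, \<iota> b, a), (c, a, \<iota> b), (b, c, a), (\<iota> b, a, c)}"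
    | (unit) u where "u \<in> K" "(x, y, z) \<in> {(e, u, u), (u, u, e), (u, e, u)}"
proof -
  from assms show ?thesis
  proof (cases rule: orbitsE)
    case (G a b c)
    have "inv_ext a = a" "inv_ext c = c" "inv_ext b = \<iota> b"
      using G_ends[OF G(1)] inv_ext_I inv_ext_S Npos_S by auto
    then have "(x, y, z) \<in> {(a, b, c), (a, c, b), (c, \<iota> b, a), (c, a, \<iota> b), (b, c, a), (\<iota> b, a, c)}"
      using G(2) ip_orbit_fixed_ends[of inv_ext a c b] by simp
    with G(1) show ?thesis by (rule that(1))
  next
    case (unit u)
    then have "(x, y, z) \<in> {(e, u, u), (u, u, e), (u, e, u)}"
      using ip_orbit_unit[of inv_ext e u] inv_ext_unit inv_ext_I K_I by simp
    with unit(1) show ?thesis by (rule that(2))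
  qed
qed

lemma G_orbits:
  assumes "(a, b, c) \<in> G"
  shows "{(a, b, c), (a, c, b), (c, \<iota> b, a), (c, a, \<iota> b), (b, c, a), (\<iota> b, a, c)} \<subseteq> design.orbits"
proof -
  have "inv_ext a = a" "inv_ext c = c" "inv_ext b = \<iota> b"
    using G_ends[OF assms] inv_ext_I inv_ext_S Npos_S by auto
  then have "ip_orbit inv_ext a b c = {(a, b, c), (a, c, b), (c, \<iota> b, a), (c, a, \<iota> b), (b, c, a),
    (\<iota> b, a, c)}"
    using ip_orbit_fixed_ends[of inv_ext a c b] by simp
  moreover have "ip_orbit inv_ext a b c \<subseteq> design.orbits" using ip_orbit_subset_orbits(1)[OF assms] .
  ultimately show ?thesis by simp
qed

lemma K_orbits:
  assumes "u \<in> K"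
  shows "{(e, u, u), (u, u, e), (u, e, u)} \<subseteq> design.orbits"
proof -
  have "ip_orbit inv_ext e u u = {(e, u, u), (u, u, e), (u, e, u)}"
    using ip_orbit_unit[of inv_ext e u] inv_ext_unit inv_ext_I K_I assms by simp
  moreover have "ip_orbit inv_ext e u u \<subseteq> design.orbits" using ip_orbit_subset_orbits(2)[OF assms] .
  ultimately show ?thesis by simp
qed

lemma orbits_mem:
  assumes "(x, y, z) \<in> design.orbits"
  shows "x \<in> S \<union> K \<and> y \<in> S \<union> K \<and> z \<in> S \<union> K"
  using assms
proof (cases rule: orbits_cases)
  case (G a b c)
  have "a \<in> S \<union> K" "c \<in> S \<union> K" "b \<in> S" "\<iota> b \<in> S"
    using G_ends[OF G(1)] Npos_S inv_mem unfolding I_def by auto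
  then show ?thesis using G(2) by auto
qed (use unit_mem in auto)

lemma orbits_closed:
  assumes "(x, y, z) \<in> design.orbits"
  shows "(inv_ext x, z, y) \<in> design.orbits \<and> (z, inv_ext y, x) \<in> design.orbits"
  using assms
proof (cases rule: orbitsE)
  case (G a b c)
  then show ?thesis
    using ip_orbit_closed[of inv_ext, OF inv_ext_inv_ext inv_ext_inv_ext inv_ext_inv_ext G(2)]
      ip_orbit_subset_orbits(1)[OF G(1)] by blast
next
  case (unit u)
  then show ?thesis
    using ip_orbit_closed[of inv_ext, OF inv_ext_inv_ext inv_ext_inv_ext inv_ext_inv_ext unit(2)]
      ip_orbit_subset_orbits(2)[OF unit(1)] by blast
qed

lemma orbits_gap:
  assumes "(x, y, z) \<in> design.orbits" "x \<in> S" "y \<in> S"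
  shows "m x y = None"
  using assms(1)
proof (cases rule: orbits_cases)
  case (G a b c)
  note ends = G_ends[OF G(1)]
  have bS: "b \<in> S" using ends Npos_S by blast
  from G(1) show ?thesis
  proof (cases rule: G_cases)
    case (shift k)
    then show ?thesis using G(2) assms(2,3) by auto
  next
    case (slot_in d)
    have cS: "c \<in> S" "\<iota> c = c" "m c (\<iota> b) = None"
      using rgaps_involution[OF slot_in(1) match_rgaps[OF slot_in(1,2)]] slot_in(4) by simp_all
    have "m b c = None"
      using pil_gap_pinv_swap[OF pil cS(1) inv_mem[OF bS] cS(3)] cS(2) inv_inv[OF bS] by simp
    then show ?thesis using G(2) assms(2,3) slot_in(3) cS by auto
  next
    case (slot_out d)
    have aS: "a \<in> S" "\<iota> a = a" "m a b = None"
      using lgaps_involution[OF slot_out(1,2)] slot_out(3) by simp_all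
    have "m (\<iota> b) a = None"
      using pil_gap_pinv_swap[OF pil aS(1) bS aS(3)] aS(2) by simp
    then show ?thesis using G(2) assms(2,3) slot_out(4) aS by auto
  qed
next
  case (unit u)
  then show ?thesis using assms(2,3) K_disjoint by auto
qed


lemma inv_ext_mem: "x \<in> S \<union> K \<Longrightarrow> inv_ext x \<in> S \<union> K"
  unfolding inv_ext_def using inv_mem by auto

sublocale extension: ip_extension S "S \<union> K" m e inv_ext design.orbits
proof
  show "(e, u, u) \<in> design.orbits" if "u \<in> S \<union> K - S" for u
    using K_orbits that by blast
qed (fact pil inv_ext_S inv_ext_mem orbits_mem orbits_closed design.orbits_single_valued orbits_gap
  | rule inv_ext_inv_ext | blast)+

lemma filled_pil: "partial_ip_loop (S \<union> K) filled_mul e"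
  unfolding filled_mul_def by (rule extension.extended_pil)

lemma filled_extends: "extends_along id S m (S \<union> K) filled_mul"
  unfolding filled_mul_def by (rule extension.extends)

lemma filled_mul_old: "x \<in> S \<Longrightarrow> y \<in> S \<Longrightarrow> m x y = Some z \<Longrightarrow> filled_mul x y = Some z"
  unfolding filled_mul_def by (rule extension.mul_old)

lemma filled_mul_orbits: "(x, y, z) \<in> design.orbits \<Longrightarrow> filled_mul x y = Some z"
  unfolding filled_mul_def by (rule extension.mul_triple)

lemma G_filled_mul:
  assumes "(a, b, c) \<in> G"
  shows "filled_mul a b = Some c" "filled_mul c (\<iota> b) = Some a"
    "filled_mul b c = Some a" "filled_mul (\<iota> b) a = Some c"
  using G_orbits[OF assms] filled_mul_orbits by blast+

lemma K_filled_mul: "u \<in> K \<Longrightarrow> filled_mul u u = Some e"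
  using K_orbits filled_mul_orbits by blast

lemma no_square_gap: "x \<in> S \<Longrightarrow> m x x \<noteq> None"
  using gap_with_non_involution pil_mul_pinv[OF pil] by fastforce

lemma filled_O3: "O3 (S \<union> K) filled_mul e = O3 S m e"
proof (rule O3_extension_eq[OF pil filled_pil filled_extends])
  show "S \<union> K - S \<subseteq> O2 (S \<union> K) filled_mul e"
    using K_filled_mul unit_mem unfolding O2_def by auto
qed (use no_square_gap in blast)

lemma left_total_G:
  assumes "y \<in> Npos" "a \<in> K \<union> lgaps y"
  obtains c where "(a, y, c) \<in> G"
proof (cases "a \<in> lgaps y")
  case True
  then show ?thesis using that assms(1) unfolding G_def by blast
next
  case False
  then obtain k where k: "k < n" "a = \<nu> k" using assms(2) unfolding K_def by blast
  show ?thesis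
  proof (cases "k \<in> slot y ` lgaps y")
    case True
    then show ?thesis using that assms(1) k unfolding G_def by blast
  next
    case False
    then show ?thesis using that assms(1) k unfolding G_def by blast
  qed
qed

lemma right_total_G:
  assumes "y \<in> Npos" "c \<in> K \<union> rgaps y"
  obtains a where "(a, y, c) \<in> G"
proof (cases "c \<in> rgaps y")
  case True
  then obtain d where "d \<in> lgaps y" "c = match y d"
    using bij_betw_imp_surj_on[OF match_bij[OF assms(1)]] by blast
  then show ?thesis using that assms(1) unfolding G_def by blast
next
  case False
  then obtain k where k: "k < n" "c = \<nu> k" using assms(2) unfolding K_def by blast
  have yS: "y \<in> S" using Npos_S[OF assms(1)] .
  show ?thesis
  proof (cases "\<exists>d\<in>lgaps y. k = slot y d + shift y")
    case True
    then show ?thesis using that assms(1) k unfolding G_def by blast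
  next
    case False
    obtain k0 where k0: "k0 < n" "(k0 + shift y) mod n = k"
      using add_mod_surj[OF k(1) shift_le[OF yS]] by blast
    have "k0 \<notin> slot y ` lgaps y"
    proof
      assume "k0 \<in> slot y ` lgaps y"
      then obtain d where d: "d \<in> lgaps y" "k0 = slot y d" by blast
      then have "k = slot y d + shift y"
        using k0(2) slot_shift_less[OF yS] unfolding lgaps_def by auto
      then show False using False d(1) by blast
    qed
    then show ?thesis using that assms(1) k k0 unfolding G_def by blast
  qed
qed

lemma left_gap_in_rgaps:
  assumes y: "y \<in> Npos" and u: "u \<in> S" "m y u = None"
  shows "u \<in> rgaps y"
proof -
  have "m (\<iota> u) (\<iota> y) = None" using pil_gap_pinv_swap[OF pil Npos_S[OF y] u] .
  then have iu: "\<iota> u \<in> rgaps y" using inv_mem[OF u(1)] unfolding rgaps_def by simp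
  moreover have "\<iota> u = u" using rgaps_involution[OF y iu] inv_inv[OF u(1)] by simp
  ultimately show ?thesis by simp
qed

lemma inv_left_gap_in_lgaps:
  assumes y: "y \<in> Npos" and u: "u \<in> S" "m (\<iota> y) u = None"
  shows "u \<in> lgaps y"
proof -
  have "m (\<iota> u) y = None"
    using pil_gap_pinv_swap[OF pil inv_mem[OF Npos_S[OF y]] u] inv_inv[OF Npos_S[OF y]] by simp
  then have iu: "\<iota> u \<in> lgaps y" using inv_mem[OF u(1)] unfolding lgaps_def by simp
  moreover have "\<iota> u = u" using lgaps_involution[OF y iu] inv_inv[OF u(1)] by simp
  ultimately show ?thesis by simp
qed

lemma Npos_row_column_total:
  assumes y: "y \<in> Npos" and u: "u \<in> S \<union> K"
  shows "filled_mul u y \<noteq> None" "filled_mul u (\<iota> y) \<noteq> None"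
    "filled_mul y u \<noteq> None" "filled_mul (\<iota> y) u \<noteq> None"
proof -
  have yS: "y \<in> S" "\<iota> y \<in> S" using Npos_mem[OF y] by blast+
  have old: "filled_mul x w \<noteq> None" if "x \<in> S" "w \<in> S" "m x w \<noteq> None" for x w
    using filled_mul_old that by blast
  show "filled_mul u y \<noteq> None"
  proof (cases "u \<in> S \<and> m u y \<noteq> None")
    case False
    then have "u \<in> K \<union> lgaps y" using u unfolding lgaps_def by auto
    then obtain c where "(u, y, c) \<in> G" by (rule left_total_G[OF y])
    then show ?thesis using G_filled_mul(1) by simp
  qed (use old yS in blast)
  show "filled_mul u (\<iota> y) \<noteq> None"
  proof (cases "u \<in> S \<and> m u (\<iota> y) \<noteq> None")
    case False
    then have "u \<in> K \<union> rgaps y" using u unfolding rgaps_def by auto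
    then obtain a where "(a, y, u) \<in> G" by (rule right_total_G[OF y])
    then show ?thesis using G_filled_mul(2) by simp
  qed (use old yS in blast)
  show "filled_mul y u \<noteq> None"
  proof (cases "u \<in> S \<and> m y u \<noteq> None")
    case False
    then have "u \<in> K \<union> rgaps y" using u left_gap_in_rgaps[OF y] by blast
    then obtain a where "(a, y, u) \<in> G" by (rule right_total_G[OF y])
    then show ?thesis using G_filled_mul(3) by simp
  qed (use old yS in blast)
  show "filled_mul (\<iota> y) u \<noteq> None"
  proof (cases "u \<in> S \<and> m (\<iota> y) u \<noteq> None")
    case False
    then have "u \<in> K \<union> lgaps y" using u inv_left_gap_in_lgaps[OF y] by blast
    then obtain c where "(u, y, c) \<in> G" by (rule left_total_G[OF y])
    then show ?thesis using G_filled_mul(4) by simp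
  qed (use old yS in blast)
qed

lemma filled_O2:
  assumes "x \<in> S \<union> K" "x \<noteq> e" "x \<notin> Npos" "x \<in> S \<Longrightarrow> \<iota> x \<notin> Npos"
  shows "x \<in> O2 (S \<union> K) filled_mul e"
proof (cases "x \<in> S")
  case True
  then have "\<iota> x = x" using assms Npos_or_inv_Npos by blast
  then have "filled_mul x x = Some e" using filled_mul_old True pil_mul_pinv[OF pil] by metis
  then show ?thesis using assms(1,2) unfolding O2_def by simp
next
  case False
  then show ?thesis using assms(1,2) K_filled_mul unfolding O2_def by auto
qed

lemma filled_gaps: "gaps (S \<union> K) filled_mul \<subseteq> O2 (S \<union> K) filled_mul e \<times> O2 (S \<union> K) filled_mul e"
proof
  fix p assume "p \<in> gaps (S \<union> K) filled_mul"
  then obtain u w where p: "p = (u, w)" "u \<in> S \<union> K" "w \<in> S \<union> K" "filled_mul u w = None"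
    unfolding gaps_def pdom_def by auto
  have "u \<noteq> e" "w \<noteq> e" using p pil_unit_mul[OF filled_pil] pil_mul_unit[OF filled_pil] by auto
  moreover have "u \<notin> Npos" "w \<notin> Npos" using p Npos_row_column_total by blast+
  moreover have "\<iota> u \<notin> Npos" if "u \<in> S"
    using p Npos_row_column_total(4)[of "\<iota> u" w] inv_inv[OF that] by auto
  moreover have "\<iota> w \<notin> Npos" if "w \<in> S"
    using p Npos_row_column_total(2)[of "\<iota> w" u] inv_inv[OF that] by auto
  ultimately show "p \<in> O2 (S \<union> K) filled_mul e \<times> O2 (S \<union> K) filled_mul e"
    using p filled_O2 by simp
qed

end

lemma fill_involution_gaps:
  assumes inf: "infinite (UNIV :: 'b set)" and pil: "partial_ip_loop (S :: 'b set) m e"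
    and fin: "finite S" and gaps: "gaps S m \<subseteq> O2 S m e \<times> S \<union> S \<times> O2 S m e"
    and n: "(card S + 1) * card S * card S < n"
  obtains Q m' where "partial_ip_loop Q m' e" "finite Q" "card Q = card S + n"
    "extends_along id S m Q m'" "O3 Q m' e = O3 S m e" "gaps Q m' \<subseteq> O2 Q m' e \<times> O2 Q m' e"
proof -
  obtain \<phi> :: "'b \<Rightarrow> nat" and k where \<phi>: "\<phi> ` S = {i. i < k}" "inj_on \<phi> S"
    using finite_imp_inj_to_nat_seg[OF fin] by blast
  then have "k = card S" using card_image[OF \<phi>(2)] by simp
  then have \<phi>_less: "\<phi> x < card S" if "x \<in> S" for x using \<phi>(1) that by blast
  have "infinite (UNIV - S)" using inf fin by (simp add: Diff_infinite_finite)
  then obtain \<nu> :: "nat \<Rightarrow> 'b" where \<nu>: "inj \<nu>" "range \<nu> \<subseteq> UNIV - S"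
    using infinite_countable_subset by blast
  have \<nu>_new: "\<nu> k \<notin> S" for k using \<nu>(2) by blast
  interpret involution_gap_filling S m e \<phi> \<nu> n
    using pil fin gaps \<phi>(2) \<phi>_less \<nu>(1) \<nu>_new n by unfold_locales
  have "card K = n" unfolding K_def using inj_on_subset[OF \<nu>(1)] by (simp add: card_image)
  moreover have "S \<inter> K = {}" using K_disjoint by blast
  moreover have "finite K" unfolding K_def by simp
  ultimately have "card (S \<union> K) = card S + n" using card_Un_disjoint[OF fin] by simp
  moreover have "finite (S \<union> K)" using fin unfolding K_def by simp
  ultimately show ?thesis
    using that[OF filled_pil _ _ filled_extends filled_O3 filled_gaps] by blast
qed

section \<open>Relabelling into the sum type\<close>

definition lift_mul :: "('a \<Rightarrow> 'a \<Rightarrow> 'a option) \<Rightarrow> 'a + 'b \<Rightarrow> 'a + 'b \<Rightarrow> ('a + 'b) option" where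
  "lift_mul mul x y = (case (x, y) of (Inl a, Inl b) \<Rightarrow> map_option Inl (mul a b) | _ \<Rightarrow> None)"

lemma lift_mul_Inl [simp]: "lift_mul mul (Inl a) (Inl b) = map_option Inl (mul a b)"
  unfolding lift_mul_def by simp

lemma lift_mul_SomeE:
  assumes "lift_mul mul (Inl a) (Inl b) = Some z"
  obtains c where "mul a b = Some c" "z = Inl c"
  using assms by auto

lemma partial_ip_loop_lift:
  assumes pil: "partial_ip_loop P mul e"
  shows "partial_ip_loop (Inl ` P :: ('a + 'b) set) (lift_mul mul) (Inl e)"
proof (rule partial_ip_loopI[where \<iota> = "\<lambda>x. Inl (pinv P mul e (projl x))"])
  show "Inl e \<in> Inl ` P" using pil_unit_mem[OF pil] by simp
next
  fix x :: "'a + 'b" assume "x \<in> Inl ` P"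
  then obtain a where a: "x = Inl a" "a \<in> P" by blast
  show "Inl (pinv P mul e (projl x)) \<in> Inl ` P" using pil_pinv_mem[OF pil a(2)] a(1) by simp
  show "lift_mul mul (Inl e) x = Some x \<and> lift_mul mul x (Inl e) = Some x"
    using pil_unit_mul[OF pil a(2)] pil_mul_unit[OF pil a(2)] a(1) by simp
  show "lift_mul mul x (Inl (pinv P mul e (projl x))) = Some (Inl e) \<and>
      lift_mul mul (Inl (pinv P mul e (projl x))) x = Some (Inl e)"
    using pil_mul_pinv[OF pil a(2)] pil_pinv_mul[OF pil a(2)] a(1) by simp
next
  fix x y z :: "'a + 'b"
  assume "x \<in> Inl ` P" "y \<in> Inl ` P" and xyz: "lift_mul mul x y = Some z"
  then obtain a b where ab: "x = Inl a" "y = Inl b" "a \<in> P" "b \<in> P" by blast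
  then obtain c where c: "mul a b = Some c" "z = Inl c" using xyz lift_mul_SomeE by metis
  show "z \<in> Inl ` P" using pil_mul_mem[OF pil ab(3,4) c(1)] c(2) by simp
  show "lift_mul mul (Inl (pinv P mul e (projl x))) z = Some y \<and>
      lift_mul mul z (Inl (pinv P mul e (projl y))) = Some x"
    using pil_cancel_left[OF pil ab(3,4) c(1)] pil_cancel_right[OF pil ab(3,4) c(1)] ab c by simp
qed

lemma O3_lift:
  "O3 (Inl ` P :: ('a + 'b) set) (lift_mul mul) (Inl e) = Inl ` O3 P mul e"
  unfolding O3_def by (auto elim!: lift_mul_SomeE)

lemma extends_along_lift: "extends_along Inl P mul (Inl ` P :: ('a + 'b) set) (lift_mul mul)"
  unfolding extends_along_def by simp

theorem proposition2:
  fixes P :: "'a set" and mul :: "'a \<Rightarrow> 'a \<Rightarrow> 'a option" and e :: 'a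
  assumes "partial_ip_loop P mul e" and "finite P" and "3 dvd o3 P mul e"
  shows "\<exists>(Q :: ('a + nat) set) mulQ.
           partial_ip_loop Q mulQ (Inl e) \<and> finite Q \<and>
           extends_along Inl P mul Q mulQ \<and>
           3 dvd o3 Q mulQ (Inl e) \<and>
           card Q \<ge> 10 \<and> card Q mod 6 = 4 \<and>
           gaps Q mulQ \<subseteq> O2 Q mulQ (Inl e) \<times> O2 Q mulQ (Inl e)"
proof -
  have inf: "infinite (UNIV :: ('a + nat) set)" by simp
  have pil: "partial_ip_loop (Inl ` P) (lift_mul mul) (Inl e)" and fin: "finite (Inl ` P)"
    using partial_ip_loop_lift[OF assms(1)] assms(2) by simp_all
  obtain S :: "('a + nat) set" and m where S: "partial_ip_loop S m (Inl e)" "finite S"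
    "extends_along id (Inl ` P) (lift_mul mul) S m"
    "gaps S m \<subseteq> O2 S m (Inl e) \<times> S \<union> S \<times> O2 S m (Inl e)"
    "O3 S m (Inl e) = O3 (Inl ` P) (lift_mul mul) (Inl e)"
    by (rule fill_gaps_off_involutions[OF inf pil fin])
  define n where "n = 6 * ((card S + 1) * card S * card S) + 5 * card S + 10"
  have "(card S + 1) * card S * card S < n" unfolding n_def by linarith
  then obtain Q m' where Q: "partial_ip_loop Q m' (Inl e)" "finite Q" "card Q = card S + n"
    "extends_along id S m Q m'" "O3 Q m' (Inl e) = O3 S m (Inl e)"
      "gaps Q m' \<subseteq> O2 Q m' (Inl e) \<times> O2 Q m' (Inl e)"
    using fill_involution_gaps[OF inf S(1,2,4)] by blast
  have "extends_along Inl P mul Q m'"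
    using extends_along_trans[OF extends_along_trans[OF extends_along_lift S(3)] Q(4)] by simp
  moreover have "o3 Q m' (Inl e) = o3 P mul e"
    unfolding o3_def Q(5) S(5) O3_lift by (simp add: card_image)
  moreover have card: "card Q = 6 * ((card S + 1) * card S * card S + card S + 1) + 4"
    unfolding Q(3) n_def by simp
  then have "card Q mod 6 = 4" by (simp only: mod_mult_self4) simp
  moreover have "10 \<le> card Q" using card by simp
  ultimately show ?thesis using Q(1,2,6) assms(3) by metis
qed

end
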